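(* Let $\mathcal{V}$ and $\mathcal{W}$ be quaternionic two-sided Banach algebras with unit $1\neq 0$, let $\mathcal{A}:\mathcal{V}\to\mathcal{W}$ be a homomorphism, and let $a,b\in\mathcal{V}$. (1) If $ab\in Pr(\Phi_{\mathcal{A}})$ and $ba\in Pr(\Phi_{\mathcal{A}})$, then $$\sigma_{S,\mathcal{A}}^{\Phi}(a+b)\setminus\{0\}=\left[\sigma_{S,\mathcal{A}}^{\Phi}(a)\cup\sigma_{S,\mathcal{A}}^{\Phi}(b)\right]\setminus\{0\}.$$ (2) If $ab\in \mathcal{A}^{-1}(0)$ and $ba\in \mathcal{A}^{-1}(0)$, then $$\sigma_{S,\mathcal{A}}^{\Phi^{0}}(a+b)\setminus\{0\}\subset\left[\sigma_{S,\mathcal{A}}^{\Phi^{0}}(a)\cup\sigma_{S,\mathcal{A}}^{\Phi^{0}}(b)\right]\setminus\{0\},$$ and if, further, $\sigma_{S,\mathcal{A}}^{\Phi^{0}}(a)=\sigma_{S,\mathcal{A}}^{\Phi}(a)$, then $$\sigma_{S,\mathcal{A}}^{\Phi^{0}}(a+b)\setminus\{0\}=\left[\sigma_{S,\mathcal{A}}^{\Phi^{0}}(a)\cup\sigma_{S,\mathcal{A}}^{\Phi^{0}}(b)\right]\setminus\{0\}.$$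
   Context: $\mathbb{H}$ denotes the quaternions; for $q\in\mathbb{H}$, $Re(q)$ is its real part and $|q|$ its norm. A quaternionic two-sided Banach algebra with unit is a two-sided $\mathbb{H}$-vector space $\mathcal{V}$ with an associative product satisfying $x(y+z)=xy+xz$, $(x+y)z=xz+yz$, $q(xy)=(qx)y$, $(xy)q=x(yq)$ for $x,y,z\in\mathcal{V}$, $q\in\mathbb{H}$, complete with respect to a norm satisfying $\|qx\|=|q|\|x\|=\|xq\|$ and $\|xy\|\le\|x\|\|y\|$, with a unit $1_{\mathcal{V}}$, $\|1_{\mathcal{V}}\|=1$. A homomorphism $\mathcal{A}:\mathcal{V}\to\mathcal{W}$ satisfies $\mathcal{A}(u+v)=\mathcal{A}(u)+\mathcal{A}(v)$, $\mathcal{A}(uv)=\mathcal{A}(u)\mathcal{A}(v)$, $\mathcal{A}(qu)=q\mathcal{A}(u)$, $\mathcal{A}(uq)=\mathcal{A}(u)q$, $\mathcal{A}(1_{\mathcal{V}})=1_{\mathcal{W}}$. $\mathcal{V}^{-1},\mathcal{W}^{-1}$ denote the groups of invertible elements. For $v\in\mathcal{V}$ and $q\in\mathbb{H}$ put $R_q(v)=v^2-2Re(q)v+|q|^2 1_{\mathcal{V}}$. Define $\Phi_{\mathcal{A}}=\{v\in\mathcal{V}:\mathcal{A}(v)\in\mathcal{W}^{-1}\}$ (Fredholm elements), $\Phi_{\mathcal{A}}^0=\mathcal{V}^{-1}+\mathcal{A}^{-1}(0)$ (Weyl elements), $Pr(\Phi_{\mathcal{A}})=\{p\in\mathcal{V}: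 p+t\in\Phi_{\mathcal{A}}\ \forall t\in\Phi_{\mathcal{A}}\}$ (Fredholm perturbations). The Fredholm S-spectrum is $\sigma_{S,\mathcal{A}}^{\Phi}(v)=\{q\in\mathbb{H}: R_q(v)\notin\Phi_{\mathcal{A}}\}$ and the Weyl S-spectrum is $\sigma_{S,\mathcal{A}}^{\Phi^0}(v)=\{q\in\mathbb{H}: R_q(v)\notin\Phi_{\mathcal{A}}^0\}$. *)

theory Defs
  imports "HOL-Analysis.Analysis"
begin

datatype quat = Quat (qRe: real) (qI: real) (qJ: real) (qK: real)

definition qadd :: "quat \<Rightarrow> quat \<Rightarrow> quat" where
  "qadd p q = Quat (qRe p + qRe q) (qI p + qI q) (qJ p + qJ q) (qK p + qK q)"

definition qmul :: "quat \<Rightarrow> quat \<Rightarrow> quat" where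
  "qmul p q = Quat
     (qRe p * qRe q - qI p * qI q - qJ p * qJ q - qK p * qK q)
     (qRe p * qI q + qI p * qRe q + qJ p * qK q - qK p * qJ q)
     (qRe p * qJ q - qI p * qK q + qJ p * qRe q + qK p * qI q)
     (qRe p * qK q + qI p * qJ q - qJ p * qI q + qK p * qRe q)"

definition qofreal :: "real \<Rightarrow> quat" where
  "qofreal r = Quat r 0 0 0"

definition qnorm :: "quat \<Rightarrow> real" where
  "qnorm q = sqrt ((qRe q)\<^sup>2 + (qI q)\<^sup>2 + (qJ q)\<^sup>2 + (qK q)\<^sup>2)"

text \<open>The underlying type is a real Banach algebra with unit (norm 1 = 1, 1 \<noteq> 0,
  submultiplicative norm, complete); lm / rm are the left / right quaternionic
  scalar multiplications, whose restriction to real scalars is the real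
  scalar multiplication of the type.\<close>

definition qbanach_alg ::
  "(quat \<Rightarrow> 'v::{banach,real_normed_algebra_1} \<Rightarrow> 'v) \<Rightarrow> ('v \<Rightarrow> quat \<Rightarrow> 'v) \<Rightarrow> bool" where
  "qbanach_alg lm rm \<longleftrightarrow>
     (\<forall>q x y. lm q (x + y) = lm q x + lm q y) \<and>
     (\<forall>q p x. lm (qadd q p) x = lm q x + lm p x) \<and>
     (\<forall>q p x. lm (qmul q p) x = lm q (lm p x)) \<and>
     (\<forall>x. lm (qofreal 1) x = x) \<and>
     (\<forall>q x y. rm (x + y) q = rm x q + rm y q) \<and>
     (\<forall>q p x. rm x (qadd q p) = rm x q + rm x p) \<and>
     (\<forall>q p x. rm x (qmul q p) = rm (rm x q) p) \<and>
     (\<forall>x. rm x (qofreal 1) = x) \<and>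
     (\<forall>q p x. rm (lm q x) p = lm q (rm x p)) \<and>
     (\<forall>r x. lm (qofreal r) x = r *\<^sub>R x) \<and>
     (\<forall>r x. rm x (qofreal r) = r *\<^sub>R x) \<and>
     (\<forall>q x y. lm q (x * y) = lm q x * y) \<and>
     (\<forall>q x y. rm (x * y) q = x * rm y q) \<and>
     (\<forall>q x. norm (lm q x) = qnorm q * norm x) \<and>
     (\<forall>q x. norm (rm x q) = qnorm q * norm x)"

definition qhom ::
  "(quat \<Rightarrow> 'v::{banach,real_normed_algebra_1} \<Rightarrow> 'v) \<Rightarrow> ('v \<Rightarrow> quat \<Rightarrow> 'v) \<Rightarrow>
   (quat \<Rightarrow> 'w::{banach,real_normed_algebra_1} \<Rightarrow> 'w) \<Rightarrow> ('w \<Rightarrow> quat \<Rightarrow> 'w) \<Rightarrow>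
   ('v \<Rightarrow> 'w) \<Rightarrow> bool" where
  "qhom lmV rmV lmW rmW A \<longleftrightarrow>
     (\<forall>u v. A (u + v) = A u + A v) \<and>
     (\<forall>u v. A (u * v) = A u * A v) \<and>
     (\<forall>q u. A (lmV q u) = lmW q (A u)) \<and>
     (\<forall>q u. A (rmV u q) = rmW (A u) q) \<and>
     A 1 = 1"

definition invertibles :: "'a::ring_1 set" where
  "invertibles = {x. \<exists>y. x * y = 1 \<and> y * x = 1}"

definition fredholm :: "('v::ring_1 \<Rightarrow> 'w::ring_1) \<Rightarrow> 'v set" where
  "fredholm A = {v. A v \<in> invertibles}"

definition weyl :: "('v::ring_1 \<Rightarrow> 'w::ring_1) \<Rightarrow> 'v set" where
  "weyl A = {u + k | u k. u \<in> invertibles \<and> A k = 0}"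

definition fred_pert :: "('v::ring_1 \<Rightarrow> 'w::ring_1) \<Rightarrow> 'v set" where
  "fred_pert A = {p. \<forall>t \<in> fredholm A. p + t \<in> fredholm A}"

definition Rq :: "'v::real_normed_algebra_1 \<Rightarrow> quat \<Rightarrow> 'v" where
  "Rq v q = v * v - (2 * qRe q) *\<^sub>R v + (qnorm q)\<^sup>2 *\<^sub>R 1"

definition fred_S_spectrum :: "('v::real_normed_algebra_1 \<Rightarrow> 'w::ring_1) \<Rightarrow> 'v \<Rightarrow> quat set" where
  "fred_S_spectrum A v = {q. Rq v q \<notin> fredholm A}"

definition weyl_S_spectrum :: "('v::real_normed_algebra_1 \<Rightarrow> 'w::ring_1) \<Rightarrow> 'v \<Rightarrow> quat set" where
  "weyl_S_spectrum A v = {q. Rq v q \<notin> weyl A}"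

definition qzero :: quat where "qzero = Quat 0 0 0 0"

end

theory Submission
  imports Defs
begin

text \<open>Put \<open>s = 2 Re q\<close> and \<open>t = |q|\<^sup>2\<close>. Expanding gives
  \<open>R\<^sub>q(a) R\<^sub>q(b) = t R\<^sub>q(a + b) + E\<close>, where \<open>E = (a - s)ab(b - s) - t(ab + ba)\<close> lies in
  every two-sided ideal containing \<open>ab\<close> and \<open>ba\<close>, and symmetrically for \<open>R\<^sub>q(b) R\<^sub>q(a)\<close>.
  The Fredholm perturbations form such an ideal, because every element of a Banach algebra
  is a sum of two invertible ones (Neumann series). Since \<open>t \<noteq> 0\<close> for \<open>q \<noteq> 0\<close>, modulo
  perturbations \<open>R\<^sub>q(a + b)\<close> is Fredholm iff both products \<open>R\<^sub>q(a) R\<^sub>q(b)\<close> and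
  \<open>R\<^sub>q(b) R\<^sub>q(a)\<close> are, i.e.\ iff \<open>R\<^sub>q(a)\<close> and \<open>R\<^sub>q(b)\<close> are. For Weyl elements one argues
  in the same way modulo the kernel of \<open>\<A>\<close>, using that \<open>xy\<close> is Weyl whenever \<open>x\<close> and
  \<open>y\<close> are, and that \<open>y\<close> is Weyl whenever \<open>x\<close> and \<open>xy\<close> are; the missing inclusion
  needs \<open>R\<^sub>q(a)\<close> to be Weyl as soon as it is Fredholm, which is the extra hypothesis.\<close>

lemma invertiblesI: "(x::'a::ring_1) * y = 1 \<Longrightarrow> y * x = 1 \<Longrightarrow> x \<in> invertibles"
  unfolding invertibles_def by blast

lemma invertiblesE:
  assumes "(x::'a::ring_1) \<in> invertibles"
  obtains y where "x * y = 1" "y * x = 1" "y \<in> invertibles"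
  using assms unfolding invertibles_def by blast

lemma invertibles_one: "(1::'a::ring_1) \<in> invertibles"
  by (rule invertiblesI) simp_all

lemma invertibles_mult:
  assumes "(x::'a::ring_1) \<in> invertibles" "y \<in> invertibles"
  shows "x * y \<in> invertibles"
proof -
  obtain x' y' where "x * x' = 1" "x' * x = 1" "y * y' = 1" "y' * y = 1"
    using assms by (metis invertiblesE)
  then have "x * y * (y' * x') = 1" "y' * x' * (x * y) = 1"
    by (metis mult.assoc mult_1_left)+
  then show ?thesis by (rule invertiblesI)
qed

lemma invertibles_uminus: "(x::'a::ring_1) \<in> invertibles \<Longrightarrow> - x \<in> invertibles"
  by (metis invertiblesE invertiblesI minus_mult_minus)

lemma invertibles_scaleR:
  assumes "r \<noteq> 0" "(x::'a::real_algebra_1) \<in> invertibles"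
  shows "r *\<^sub>R x \<in> invertibles"
proof -
  have "r *\<^sub>R (1::'a) \<in> invertibles"
    using \<open>r \<noteq> 0\<close> by (intro invertiblesI[of _ "inverse r *\<^sub>R 1"]) simp_all
  then show ?thesis
    using invertibles_mult[OF _ assms(2)] by fastforce
qed

text \<open>A left inverse of \<open>yx\<close> and a right inverse of \<open>xy\<close> give a left and a right inverse
  of \<open>x\<close>, which then agree.\<close>

lemma invertibles_of_mult_both:
  assumes "(x::'a::ring_1) * y \<in> invertibles" "y * x \<in> invertibles"
  shows "x \<in> invertibles"
proof -
  obtain z where z: "x * y * z = 1" using assms(1) by (metis invertiblesE)
  obtain w where w: "w * (y * x) = 1" using assms(2) by (metis invertiblesE)
  have "w * y = (w * (y * x)) * (y * z)"
    using z by (metis mult.assoc mult_1_right)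
  then have "w * y = y * z" using w by simp
  then have "y * z * x = 1"
    using w by (metis mult.assoc)
  then show ?thesis
    using z by (intro invertiblesI[of _ "y * z"]) (simp_all add: mult.assoc)
qed

lemma one_minus_invertible:
  fixes x :: "'a::{banach,real_normed_algebra_1}"
  assumes "norm x < 1"
  shows "1 - x \<in> invertibles"
proof -
  define y where "y = (\<Sum>n. x ^ n)"
  have y: "(\<lambda>n. x ^ n) sums y"
    unfolding y_def using complete_algebra_summable_geometric[OF assms] by (rule summable_sums)
  have telescope: "(\<lambda>n. x ^ n - x ^ Suc n) sums 1"
    using telescope_sums'[OF LIMSEQ_power_zero[OF assms]] by simp
  have "(\<lambda>n. (1 - x) * x ^ n) sums ((1 - x) * y)" "(\<lambda>n. x ^ n * (1 - x)) sums (y * (1 - x))"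
    using sums_mult[OF y] sums_mult2[OF y] by blast+
  moreover have "(\<lambda>n. (1 - x) * x ^ n) = (\<lambda>n. x ^ n - x ^ Suc n)"
    "(\<lambda>n. x ^ n * (1 - x)) = (\<lambda>n. x ^ n - x ^ Suc n)"
    by (simp_all add: algebra_simps power_commutes)
  ultimately show ?thesis
    using telescope sums_unique2 by (metis invertiblesI)
qed

lemma sum_of_invertibles:
  fixes v :: "'a::{banach,real_normed_algebra_1}"
  obtains u w where "u \<in> invertibles" "w \<in> invertibles" "v = u + w"
proof
  define l where "l = norm v + 1"
  have l: "l > 0" unfolding l_def by (simp add: add_nonneg_pos)
  have "norm (inverse l *\<^sub>R v) < 1"
    using l unfolding l_def by (simp add: field_simps)
  then have "(- l) *\<^sub>R (1 - inverse l *\<^sub>R v) \<in> invertibles"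
    using l by (intro invertibles_scaleR one_minus_invertible) auto
  then show "v - l *\<^sub>R 1 \<in> invertibles"
    using l by (simp add: algebra_simps)
  show "l *\<^sub>R (1::'a) \<in> invertibles"
    using l by (intro invertibles_scaleR invertibles_one) auto
qed simp

lemma Rq_mult_Rq:
  fixes a b :: "'v::real_normed_algebra_1"
  shows "Rq a q * Rq b q = (qnorm q)\<^sup>2 *\<^sub>R Rq (a + b) q
    + ((a - (2 * qRe q) *\<^sub>R 1) * (a * b) * (b - (2 * qRe q) *\<^sub>R 1) - (qnorm q)\<^sup>2 *\<^sub>R (a * b + b * a))"
  unfolding Rq_def by (simp add: algebra_simps)

lemma qnorm_eq_0_iff: "qnorm q = 0 \<longleftrightarrow> q = qzero"
  unfolding qnorm_def qzero_def
  by (cases q) (auto simp: add_nonneg_eq_0_iff)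

locale real_alg_hom =
  fixes A :: "'v::{banach,real_normed_algebra_1} \<Rightarrow> 'w::real_normed_algebra_1"
  assumes A_add [simp]: "A (u + v) = A u + A v"
    and A_mult [simp]: "A (u * v) = A u * A v"
    and A_one [simp]: "A 1 = 1"
    and A_scaleR [simp]: "A (r *\<^sub>R u) = r *\<^sub>R A u"
begin

lemma A_zero [simp]: "A 0 = 0"
  using A_scaleR[of 0 0] by simp

lemma A_uminus [simp]: "A (- u) = - A u"
  using A_scaleR[of "-1" u] by simp

lemma A_diff [simp]: "A (u - v) = A u - A v"
  using A_add[of u "- v"] by simp

lemma invertibles_image: "u \<in> invertibles \<Longrightarrow> A u \<in> invertibles"
  by (metis A_mult A_one invertiblesE invertiblesI)

lemma fredholm_mult: "x \<in> fredholm A \<Longrightarrow> y \<in> fredholm A \<Longrightarrow> x * y \<in> fredholm A"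
  unfolding fredholm_def by (simp add: invertibles_mult)

lemma fredholm_uminus: "x \<in> fredholm A \<Longrightarrow> - x \<in> fredholm A"
  unfolding fredholm_def by (simp add: invertibles_uminus)

lemma fredholm_scaleR_iff: "r \<noteq> 0 \<Longrightarrow> r *\<^sub>R x \<in> fredholm A \<longleftrightarrow> x \<in> fredholm A"
  unfolding fredholm_def
  using invertibles_scaleR[of r "A x"] invertibles_scaleR[of "inverse r" "r *\<^sub>R A x"] by auto

lemma fredholm_of_mult_both:
  "x * y \<in> fredholm A \<Longrightarrow> y * x \<in> fredholm A \<Longrightarrow> x \<in> fredholm A"
  unfolding fredholm_def by (simp add: invertibles_of_mult_both)

lemma invertibles_subset_fredholm: "invertibles \<subseteq> fredholm A"
  unfolding fredholm_def by (auto intro: invertibles_image)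

lemma fred_pert_add: "p \<in> fred_pert A \<Longrightarrow> p' \<in> fred_pert A \<Longrightarrow> p + p' \<in> fred_pert A"
  unfolding fred_pert_def by (simp add: add.assoc)

lemma fred_pert_uminus:
  assumes "p \<in> fred_pert A"
  shows "- p \<in> fred_pert A"
  unfolding fred_pert_def
proof (intro CollectI ballI)
  fix t assume "t \<in> fredholm A"
  then have "- (p + - t) \<in> fredholm A"
    using assms unfolding fred_pert_def by (blast intro: fredholm_uminus)
  then show "- p + t \<in> fredholm A" by simp
qed

lemma fred_pert_diff: "p \<in> fred_pert A \<Longrightarrow> p' \<in> fred_pert A \<Longrightarrow> p - p' \<in> fred_pert A"
  using fred_pert_add[OF _ fred_pert_uminus] by simp

lemma kernel_subset_fred_pert: "A k = 0 \<Longrightarrow> k \<in> fred_pert A"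
  unfolding fred_pert_def fredholm_def by simp

lemma fredholm_add_fred_pert_iff:
  assumes "p \<in> fred_pert A"
  shows "x + p \<in> fredholm A \<longleftrightarrow> x \<in> fredholm A"
proof
  show "x \<in> fredholm A" if "x + p \<in> fredholm A"
    using that fred_pert_uminus[OF assms] unfolding fred_pert_def by force
qed (use assms in \<open>auto simp: fred_pert_def add.commute\<close>)

lemma fred_pert_mult_invertibles:
  assumes p: "p \<in> fred_pert A" and u: "u \<in> invertibles" and w: "w \<in> invertibles"
  shows "u * p * w \<in> fred_pert A"
  unfolding fred_pert_def
proof (intro CollectI ballI)
  fix t assume t: "t \<in> fredholm A"
  obtain u' w' where u': "u * u' = 1" "u' \<in> invertibles" and w': "w' * w = 1" "w' \<in> invertibles"
    using u w by (metis invertiblesE)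
  have "u' * t * w' \<in> fredholm A"
    using t u' w' invertibles_subset_fredholm by (blast intro: fredholm_mult)
  then have "u * (p + u' * t * w') * w \<in> fredholm A"
    using p u w invertibles_subset_fredholm unfolding fred_pert_def by (blast intro: fredholm_mult)
  moreover have "u * (p + u' * t * w') * w = u * p * w + (u * u') * t * (w' * w)"
    by (simp add: algebra_simps)
  ultimately show "u * p * w + t \<in> fredholm A"
    using u' w' by simp
qed

lemma fred_pert_mult:
  assumes "p \<in> fred_pert A"
  shows "v * p * w \<in> fred_pert A"
proof -
  obtain v1 v2 where v: "v1 \<in> invertibles" "v2 \<in> invertibles" "v = v1 + v2"
    by (rule sum_of_invertibles)
  obtain w1 w2 where w: "w1 \<in> invertibles" "w2 \<in> invertibles" "w = w1 + w2"
    by (rule sum_of_invertibles)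
  have "v1 * p * w1 + v1 * p * w2 + (v2 * p * w1 + v2 * p * w2) \<in> fred_pert A"
    using assms v w by (intro fred_pert_add fred_pert_mult_invertibles)
  then show ?thesis
    using v w by (simp add: algebra_simps)
qed

lemma fred_pert_scaleR: "p \<in> fred_pert A \<Longrightarrow> r *\<^sub>R p \<in> fred_pert A"
  using fred_pert_mult[of p "r *\<^sub>R 1" 1] by simp

lemma weylI: "u \<in> invertibles \<Longrightarrow> A k = 0 \<Longrightarrow> u + k \<in> weyl A"
  unfolding weyl_def by blast

lemma weylE:
  assumes "x \<in> weyl A"
  obtains u k where "x = u + k" "u \<in> invertibles" "A k = 0"
  using assms unfolding weyl_def by blast

lemma weyl_subset_fredholm: "weyl A \<subseteq> fredholm A"
  unfolding fredholm_def by (auto elim!: weylE intro: invertibles_image)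

lemma weyl_add_kernel_iff:
  assumes k: "A k = 0"
  shows "x + k \<in> weyl A \<longleftrightarrow> x \<in> weyl A"
proof
  assume "x \<in> weyl A"
  then obtain u k' where "x = u + k'" "u \<in> invertibles" "A k' = 0"
    by (rule weylE)
  then show "x + k \<in> weyl A"
    using weylI[of u "k' + k"] k by (simp add: add.assoc)
next
  assume "x + k \<in> weyl A"
  then obtain u k' where "x + k = u + k'" "u \<in> invertibles" "A k' = 0"
    by (rule weylE)
  then have "x = u + (k' - k)" "A (k' - k) = 0"
    using k by (simp_all add: add_diff_eq eq_diff_eq)
  with \<open>u \<in> invertibles\<close> show "x \<in> weyl A"
    by (simp add: weylI)
qed

lemma weyl_scaleR_iff:
  assumes "r \<noteq> 0"
  shows "r *\<^sub>R x \<in> weyl A \<longleftrightarrow> x \<in> weyl A"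
proof -
  have scale: "s *\<^sub>R y \<in> weyl A" if "s \<noteq> 0" "y \<in> weyl A" for s y
    using that by (elim weylE) (auto simp: scaleR_add_right intro!: weylI invertibles_scaleR)
  show ?thesis
    using scale[OF assms] scale[of "inverse r" "r *\<^sub>R x"] assms by auto
qed

lemma weyl_mult:
  assumes "x \<in> weyl A" "y \<in> weyl A"
  shows "x * y \<in> weyl A"
proof -
  obtain u k u' k' where "x = u + k" "u \<in> invertibles" "A k = 0"
    and "y = u' + k'" "u' \<in> invertibles" "A k' = 0"
    using assms by (metis weylE)
  moreover have "x * y = u * u' + (u * k' + k * u' + k * k')"
    using \<open>x = u + k\<close> \<open>y = u' + k'\<close> by (simp add: algebra_simps)
  ultimately show ?thesis
    by (simp add: weylI invertibles_mult)
qed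

text \<open>Writing \<open>x = u + k\<close>, the element \<open>u y = xy - ky\<close> is Weyl, and so is \<open>y = u\<inverse> (u y)\<close>.\<close>

lemma weyl_right_factor:
  assumes x: "x \<in> weyl A" and xy: "x * y \<in> weyl A"
  shows "y \<in> weyl A"
proof -
  obtain u k where u: "x = u + k" "u \<in> invertibles" and k: "A k = 0"
    using x by (rule weylE)
  obtain u' where u': "u' * u = 1" "u' \<in> invertibles"
    using u(2) by (metis invertiblesE)
  have "A (- (k * y)) = 0" using k by simp
  then have "u * y \<in> weyl A"
    using xy weyl_add_kernel_iff[of "- (k * y)" "x * y"] u(1) by (simp add: algebra_simps)
  moreover have "u' \<in> weyl A"
    using weylI[of u' 0] u' by simp
  ultimately have "u' * (u * y) \<in> weyl A"
    by (rule weyl_mult[rotated])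
  then show ?thesis
    using u' by (metis mult.assoc mult_1_left)
qed

lemma Rq_mult_Rq_remainder_fred_pert:
  assumes "x \<in> fred_pert A" "y \<in> fred_pert A"
  shows "(c - s *\<^sub>R 1) * x * (d - s *\<^sub>R 1) - r *\<^sub>R (x + y) \<in> fred_pert A"
  using assms by (intro fred_pert_diff fred_pert_mult fred_pert_scaleR fred_pert_add)

lemma fredholm_Rq_add_iff:
  assumes q: "q \<noteq> qzero" and ab: "a * b \<in> fred_pert A" and ba: "b * a \<in> fred_pert A"
  shows "Rq (a + b) q \<in> fredholm A \<longleftrightarrow> Rq a q \<in> fredholm A \<and> Rq b q \<in> fredholm A"
proof -
  have t: "(qnorm q)\<^sup>2 \<noteq> 0"
    using q qnorm_eq_0_iff by simp
  have "Rq a q * Rq b q \<in> fredholm A \<longleftrightarrow> Rq (a + b) q \<in> fredholm A"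
    using Rq_mult_Rq[of a q b] Rq_mult_Rq_remainder_fred_pert[OF ab ba]
    by (simp add: fredholm_add_fred_pert_iff fredholm_scaleR_iff[OF t])
  moreover have "Rq b q * Rq a q \<in> fredholm A \<longleftrightarrow> Rq (a + b) q \<in> fredholm A"
    using Rq_mult_Rq[of b q a] Rq_mult_Rq_remainder_fred_pert[OF ba ab]
    by (simp add: fredholm_add_fred_pert_iff fredholm_scaleR_iff[OF t] add.commute)
  ultimately show ?thesis
    by (metis fredholm_mult fredholm_of_mult_both)
qed

lemma weyl_Rq_add_iff:
  assumes q: "q \<noteq> qzero" and ker: "A (a * b) = 0" "A (b * a) = 0"
    and a: "Rq a q \<in> weyl A"
  shows "Rq (a + b) q \<in> weyl A \<longleftrightarrow> Rq b q \<in> weyl A"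
proof -
  have t: "(qnorm q)\<^sup>2 \<noteq> 0"
    using q qnorm_eq_0_iff by simp
  have "Rq a q * Rq b q \<in> weyl A \<longleftrightarrow> Rq (a + b) q \<in> weyl A"
    using Rq_mult_Rq[of a q b] ker by (simp add: weyl_add_kernel_iff weyl_scaleR_iff[OF t])
  then show ?thesis
    using weyl_mult weyl_right_factor a by blast
qed

lemma fred_S_spectrum_add:
  assumes "a * b \<in> fred_pert A" "b * a \<in> fred_pert A"
  shows "fred_S_spectrum A (a + b) - {qzero} = (fred_S_spectrum A a \<union> fred_S_spectrum A b) - {qzero}"
  using fredholm_Rq_add_iff[OF _ assms] unfolding fred_S_spectrum_def by auto

lemma weyl_S_spectrum_add_subset:
  assumes "A (a * b) = 0" "A (b * a) = 0"
  shows "weyl_S_spectrum A (a + b) - {qzero} \<subseteq> (weyl_S_spectrum A a \<union> weyl_S_spectrum A b) - {qzero}"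
  using weyl_Rq_add_iff[OF _ assms] unfolding weyl_S_spectrum_def by auto

lemma weyl_S_spectrum_add:
  assumes ker: "A (a * b) = 0" "A (b * a) = 0"
    and spec: "weyl_S_spectrum A a = fred_S_spectrum A a"
  shows "weyl_S_spectrum A (a + b) - {qzero} = (weyl_S_spectrum A a \<union> weyl_S_spectrum A b) - {qzero}"
proof -
  have "Rq a q \<in> weyl A \<and> Rq b q \<in> weyl A"
    if q: "q \<noteq> qzero" and ab: "Rq (a + b) q \<in> weyl A" for q
  proof -
    have "Rq a q \<in> fredholm A"
      using ab weyl_subset_fredholm fredholm_Rq_add_iff[OF q kernel_subset_fred_pert kernel_subset_fred_pert]
        ker by blast
    then have a: "Rq a q \<in> weyl A"
      using spec unfolding weyl_S_spectrum_def fred_S_spectrum_def by (simp add: set_eq_iff)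
    then show ?thesis
      using weyl_Rq_add_iff[OF q ker a] ab by blast
  qed
  with weyl_S_spectrum_add_subset[OF ker] show ?thesis
    unfolding weyl_S_spectrum_def by auto
qed

end

text \<open>Of the quaternionic structure, only its restriction to real scalars enters the argument.\<close>

lemma qhom_real_alg_hom:
  assumes "qbanach_alg lmV rmV" "qbanach_alg lmW rmW" "qhom lmV rmV lmW rmW A"
  shows "real_alg_hom A"
proof
  fix r u
  have "A (r *\<^sub>R u) = A (lmV (qofreal r) u)"
    using assms(1) unfolding qbanach_alg_def by simp
  also have "\<dots> = lmW (qofreal r) (A u)"
    using assms(3) unfolding qhom_def by blast
  also have "\<dots> = r *\<^sub>R A u"
    using assms(2) unfolding qbanach_alg_def by simp
  finally show "A (r *\<^sub>R u) = r *\<^sub>R A u" .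
qed (use assms(3) in \<open>simp_all add: qhom_def\<close>)

theorem mainTheorem1:
  fixes lmV :: "quat \<Rightarrow> 'v::{banach,real_normed_algebra_1} \<Rightarrow> 'v"
    and rmV :: "'v \<Rightarrow> quat \<Rightarrow> 'v"
    and lmW :: "quat \<Rightarrow> 'w::{banach,real_normed_algebra_1} \<Rightarrow> 'w"
    and rmW :: "'w \<Rightarrow> quat \<Rightarrow> 'w"
    and A :: "'v \<Rightarrow> 'w"
    and a b :: 'v
  assumes "qbanach_alg lmV rmV"
    and "qbanach_alg lmW rmW"
    and "qhom lmV rmV lmW rmW A"
  shows "(a * b \<in> fred_pert A \<and> b * a \<in> fred_pert A \<longrightarrow>
            fred_S_spectrum A (a + b) - {qzero} =
            (fred_S_spectrum A a \<union> fred_S_spectrum A b) - {qzero})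
       \<and> (A (a * b) = 0 \<and> A (b * a) = 0 \<longrightarrow>
            (weyl_S_spectrum A (a + b) - {qzero} \<subseteq>
              (weyl_S_spectrum A a \<union> weyl_S_spectrum A b) - {qzero})
          \<and> (weyl_S_spectrum A a = fred_S_spectrum A a \<longrightarrow>
              weyl_S_spectrum A (a + b) - {qzero} =
              (weyl_S_spectrum A a \<union> weyl_S_spectrum A b) - {qzero}))"
proof -
  interpret real_alg_hom A
    using qhom_real_alg_hom assms .
  show ?thesis
    using fred_S_spectrum_add[of a b] weyl_S_spectrum_add_subset[of a b] weyl_S_spectrum_add[of a b]
    by blast
qed

end
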